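(* For each positive integer $m$, with $L=\tfrac13(4^m-1)$, there are infinitely many indices $i\ge0$ such that $c_i=c_{i+1}=\cdots=c_{i+L-1}=0$. In particular, the sequence $(c_n)_{n\ge0}$ contains arbitrarily long blocks of consecutive $0$'s.
   Context: For $n\in\mathbb{N}$ let $s_2(n)$ be the sum of the binary digits of $n$ and $t_n=s_2(n)\bmod 2$ (the Prouhet–Thue–Morse sequence). Let $F(X)=\sum_{n\ge1}t_nX^n\in\mathbb{F}_2[[X]]$ and let $G(X)=\sum_{n\ge1}c_nX^n\in\mathbb{F}_2[[X]]$ be its compositional inverse, i.e. $F(G(X))=G(F(X))=X$; set $c_0=0$. The $c_n$ are identified with integers in $\{0,1\}$. *)

theory Defs
  imports "HOL-Computational_Algebra.Formal_Power_Series" "HOL-Library.Z2"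
begin

fun s2 :: "nat \<Rightarrow> nat" where
  "s2 n = (if n = 0 then 0 else n mod 2 + s2 (n div 2))"

definition tm :: "nat \<Rightarrow> bit" where
  "tm n = of_nat (s2 n mod 2)"

definition TM_F :: "bit fps" where
  "TM_F = Abs_fps (\<lambda>n. if n = 0 then 0 else tm n)"

definition TM_G :: "bit fps" where
  "TM_G = fps_inv TM_F"

definition c :: "nat \<Rightarrow> bit" where
  "c n = fps_nth TM_G n"

end

theory Submission
  imports Defs "HOL-Library.Disjoint_Sets" "HOL-Library.Infinite_Set"
begin

text \<open>
  Over \<open>\<bbbF>\<^sub>2\<close> squaring is \<open>f(X) \<mapsto> f(X\<^sup>2)\<close>, so the relations \<open>t\<^sub>2\<^sub>n = t\<^sub>n\<close>,
  \<open>t\<^sub>2\<^sub>n\<^sub>+\<^sub>1 = t\<^sub>n + 1\<close> give the algebraic equation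
  \<open>(1+X)\<^sup>2 F = (1+X)\<^sup>3 F\<^sup>2 + X\<close>. Substituting \<open>X := G\<close> yields an equation for \<open>G\<close>
  which says exactly that \<open>Q = 1 + X(1 + G)\<close> is a cube root of \<open>1 + X\<close>. A cube root
  with constant term 1 is unique, and an explicit one is the series \<open>P\<close> with
  \<open>P(X)(1+X) = P(X\<^sup>4) = P(X)\<^sup>4\<close>: its coefficient at \<open>m\<close> is 1 iff \<open>m mod 8 < 4\<close> and
  \<open>m div 8\<close> has only the base-4 digits 0 and 1. Hence \<open>c\<^sub>n = P\<^sub>n\<^sub>+\<^sub>1\<close> vanishes whenever
  the leading base-4 digit of \<open>(n+1) div 8\<close> is 2, i.e. on the blocks
  \<open>16\<cdot>4\<^sup>k \<le> n + 1 < 24\<cdot>4\<^sup>k\<close>.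
\<close>

unbundle fps_syntax

definition fps_expand :: "nat \<Rightarrow> 'a::zero fps \<Rightarrow> 'a fps" where
  "fps_expand k f = Abs_fps (\<lambda>n. if k dvd n then f $ (n div k) else 0)"

lemma fps_expand_nth: "fps_expand k f $ n = (if k dvd n then f $ (n div k) else 0)"
  by (simp add: fps_expand_def)

lemma fps_expand_expand: "fps_expand a (fps_expand b f) = fps_expand (a * b) f"
proof (rule fps_ext)
  fix n
  have "(a dvd n \<and> b dvd n div a) \<longleftrightarrow> a * b dvd n"
    by (cases "a = 0") (auto simp: mult.commute elim!: dvdE)
  then show "fps_expand a (fps_expand b f) $ n = fps_expand (a * b) f $ n"
    by (auto simp: fps_expand_nth div_mult2_eq)
qed

lemma fps_square_nth_char2:
  fixes f :: "'a::comm_ring_1 fps"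
  assumes two: "(2::'a) = 0"
  shows "(f^2) $ n = (if even n then (f $ (n div 2))^2 else 0)"
proof -
  let ?g = "\<lambda>i. f $ i * f $ (n - i)"
  define M where "M = {i. 2 * i = n}"
  have M: "M = (if even n then {n div 2} else {})"
    by (auto simp: M_def)
  have "(f^2) $ n = (\<Sum>i\<in>{0..n}. ?g i)"
    by (simp add: power2_eq_square fps_mult_nth)
  also have "\<dots> = (\<Sum>i\<in>{0..n} - M. ?g i) + (\<Sum>i\<in>M. ?g i)"
    by (rule sum.subset_diff) (auto simp: M_def)
  also have "(\<Sum>i\<in>{0..n} - M. ?g i) = 0"
  proof (rule sum_involution_eq_0[where h = "\<lambda>i. n - i"])
    fix i assume "i \<in> {0..n} - M"
    have "?g (n - i) + ?g i = 2 * ?g i"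
      using \<open>i \<in> {0..n} - M\<close> by (simp add: mult.commute)
    then show "?g (n - i) + ?g i = 0"
      by (simp add: two)
  qed (auto simp: M_def)
  moreover have "even n \<Longrightarrow> n - n div 2 = n div 2"
    by auto
  ultimately show ?thesis
    by (simp add: M power2_eq_square)
qed

lemma fps_square_bit: "(f::bit fps)^2 = fps_expand 2 f"
proof (rule fps_ext)
  fix n
  have "(f $ k)^2 = f $ k" for k
    by (cases "f $ k") simp_all
  then show "(f^2) $ n = fps_expand 2 f $ n"
    by (simp add: fps_square_nth_char2[OF bit_2_eq_0] fps_expand_nth)
qed

lemma fps_power4_bit: "(f::bit fps)^4 = fps_expand 4 f"
proof -
  have "f^4 = (f^2)^2"
    by (simp flip: power_mult)
  then show ?thesis
    by (simp add: fps_square_bit fps_expand_expand)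
qed

declare s2.simps[simp del]

lemma s2_double: "s2 (2 * n) = s2 n"
  by (cases "n = 0") (simp_all add: s2.simps[of "2 * n"])

lemma s2_double_plus1: "s2 (2 * n + 1) = s2 n + 1"
  by (subst s2.simps) simp

lemma tm_0: "tm 0 = 0"
  by (simp add: tm_def s2.simps[of 0])

lemma tm_double: "tm (2 * n) = tm n"
  by (simp only: tm_def s2_double)

lemma tm_double_plus1: "tm (2 * n + 1) = tm n + 1"
  unfolding tm_def s2_double_plus1
  by (cases "even (s2 n)") (auto simp: odd_iff_mod_2_eq_one even_iff_mod_2_eq_zero mod_Suc)

lemma TM_F_nth: "TM_F $ n = tm n"
  by (simp add: TM_F_def tm_0)

definition even_powers :: "bit fps" where
  "even_powers = Abs_fps (\<lambda>n. of_bool (even n))"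

lemma even_powers_times_square: "even_powers * (1 + fps_X)^2 = 1"
proof -
  have "even_powers * (1 + fps_X) = Abs_fps (\<lambda>_. 1)"
    by (rule fps_ext) (simp add: even_powers_def distrib_left)
  moreover have "Abs_fps (\<lambda>_. 1) * (1 + fps_X) = (1 :: bit fps)"
    by (rule fps_ext) (simp add: distrib_left)
  ultimately show ?thesis
    by (simp add: power2_eq_square mult.assoc[symmetric])
qed

lemma TM_F_split: "TM_F = fps_expand 2 TM_F * (1 + fps_X) + fps_X * even_powers"
proof (rule fps_ext)
  fix n :: nat
  consider m where "n = 2 * m" | m where "n = 2 * m + 1"
    by (metis evenE oddE)
  then show "TM_F $ n = (fps_expand 2 TM_F * (1 + fps_X) + fps_X * even_powers) $ n"
  proof cases
    case 1
    then show ?thesis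
      by (cases "m = 0") (auto simp: TM_F_nth tm_0 tm_double fps_expand_nth distrib_left even_powers_def)
  next
    case 2
    have "tm (Suc (2 * m)) = 1 + tm m"
      using tm_double_plus1[of m] by (simp add: add.commute)
    with 2 show ?thesis
      by (simp add: TM_F_nth fps_expand_nth distrib_left even_powers_def)
  qed
qed

lemma TM_F_equation: "(1 + fps_X)^2 * TM_F = (1 + fps_X)^3 * TM_F^2 + fps_X"
proof -
  have "(1 + fps_X)^2 * TM_F = (1 + fps_X)^2 * (TM_F^2 * (1 + fps_X) + fps_X * even_powers)"
    by (subst TM_F_split) (simp only: fps_square_bit)
  also have "\<dots> = (1 + fps_X)^3 * TM_F^2 + fps_X * (even_powers * (1 + fps_X)^2)"
    by algebra
  finally show ?thesis
    by (simp only: even_powers_times_square mult_1_right)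
qed

lemma TM_G_nth_0: "TM_G $ 0 = 0"
  by (simp add: TM_G_def fps_inv_def)

lemma TM_F_compose_TM_G: "TM_F oo TM_G = fps_X"
  unfolding TM_G_def
  by (rule fps_inv_right) (simp_all add: TM_F_nth tm_0 tm_double_plus1[of 0, simplified])

lemma TM_G_equation: "(1 + TM_G)^2 * fps_X = (1 + TM_G)^3 * fps_X^2 + TM_G"
proof -
  have one_plus_X: "(1 + fps_X) oo TM_G = 1 + TM_G"
    by (simp only: fps_compose_add_distrib fps_compose_1 fps_X_fps_compose_startby0[OF TM_G_nth_0])
  note compose_simps = fps_compose_add_distrib fps_compose_mult_distrib[OF TM_G_nth_0]
    fps_compose_power[OF TM_G_nth_0, symmetric] fps_compose_1 one_plus_X TM_F_compose_TM_G
  have "((1 + fps_X)^2 * TM_F) oo TM_G = ((1 + fps_X)^3 * TM_F^2 + fps_X) oo TM_G"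
    by (simp only: TM_F_equation)
  then show ?thesis
    by (simp only: compose_simps fps_X_fps_compose_startby0[OF TM_G_nth_0])
qed

lemma cube_of_one_plus_mult_char2:
  fixes x g :: "'a::comm_ring_1"
  assumes two: "(2::'a) = 0" and eq: "(1 + g)^2 * x = (1 + g)^3 * x^2 + g"
  shows "(1 + x * (1 + g))^3 = 1 + x"
proof -
  define h where "h = x * (1 + g)"
  have "(1 + h)^3 - (1 + x) = 3 * x * ((1 + g)^2 * x - ((1 + g)^3 * x^2 + g))
                               + 2 * (3 * h + 2 * h^3 - 2 * x)"
    unfolding h_def by (simp add: algebra_simps power2_eq_square power3_eq_cube)
  then show ?thesis
    by (simp add: eq two h_def)
qed

lemma fps_cube_eq_imp_eq:
  fixes P Q :: "'a::idom fps"
  assumes "P^3 = Q^3" "P $ 0 = 1" "Q $ 0 = 1" "(3::'a) \<noteq> 0"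
  shows "P = Q"
proof -
  have "(P - Q) * (P^2 + P * Q + Q^2) = P^3 - Q^3"
    by algebra
  then have "(P - Q) * (P^2 + P * Q + Q^2) = 0"
    using assms(1) by simp
  moreover have "(P^2 + P * Q + Q^2) $ 0 = 3"
    using assms(2,3) by (simp add: power2_eq_square)
  then have "P^2 + P * Q + Q^2 \<noteq> 0"
    using assms(4) by (metis fps_zero_nth)
  ultimately show ?thesis
    by simp
qed

lemma cube_one_plus_X_mult_one_plus_TM_G: "(1 + fps_X * (1 + TM_G))^3 = 1 + fps_X"
  by (rule cube_of_one_plus_mult_char2[OF _ TM_G_equation]) (simp add: fps_numeral_fps_const)

fun base4_binary :: "nat \<Rightarrow> bool" where
  "base4_binary q = (if q = 0 then True else q mod 4 < 2 \<and> base4_binary (q div 4))"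

declare base4_binary.simps[simp del]

lemma base4_binary_0: "base4_binary 0"
  by (subst base4_binary.simps) simp

lemma base4_binary_iff: "base4_binary q \<longleftrightarrow> q mod 4 < 2 \<and> base4_binary (q div 4)"
  by (cases "q = 0") (simp_all add: base4_binary_0 base4_binary.simps[of q])

lemma not_base4_binary_leading_digit_2:
  assumes "2 * 4^k \<le> q" "q < 3 * 4^k"
  shows "\<not> base4_binary q"
  using assms
proof (induction k arbitrary: q)
  case 0
  then have "q = 2"
    by simp
  then show ?case
    using base4_binary_iff[of 2] by simp
next
  case (Suc k)
  have "2 * 4^k \<le> q div 4"
    using Suc.prems(1) div_le_mono[of "4 * (2 * 4^k)" q 4] by simp
  moreover have "q div 4 < 3 * 4^k"
    using Suc.prems(2) by (simp add: less_mult_imp_div_less)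
  ultimately show ?case
    using Suc.IH base4_binary_iff by blast
qed

definition cube_root_series :: "bit fps" where
  "cube_root_series = Abs_fps (\<lambda>m. of_bool (even (m div 4) \<and> base4_binary (m div 8)))"

lemma cube_root_series_nth_0: "cube_root_series $ 0 = 1"
  by (simp add: cube_root_series_def base4_binary_0)

lemma cube_root_series_nth_block:
  assumes "b < 4"
  shows "cube_root_series $ (4 * r + b) = of_bool (even r \<and> base4_binary (r div 2))"
proof -
  have "(4 * r + b) div 4 = r" "(4 * r + b) div 8 = r div 2"
    using assms div_mult2_eq[of "4 * r + b" 4 2] by simp_all
  then show ?thesis
    by (simp add: cube_root_series_def)
qed

lemma cube_root_series_nth_pair:
  assumes "e < 2"
  shows "cube_root_series $ (2 * q + e) = of_bool (base4_binary q)"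
proof -
  have "2 * q + e = 4 * (q div 2) + (2 * (q mod 2) + e)"
    using div_mult_mod_eq[of q 2] by linarith
  moreover have "2 * (q mod 2) + e < 4"
    using assms by simp
  moreover have "even (q div 2) \<longleftrightarrow> q mod 4 < 2"
    by presburger
  moreover have "q div 2 div 2 = q div 4"
    by (simp add: div_mult2_eq)
  ultimately show ?thesis
    using base4_binary_iff[of q] by (simp only: cube_root_series_nth_block)
qed

lemma cube_root_series_times_one_plus_X:
  "cube_root_series * (1 + fps_X) = fps_expand 4 cube_root_series"
proof (rule fps_ext)
  fix m :: nat
  let ?P = "\<lambda>m. cube_root_series $ m"
  obtain r b where m: "m = 4 * r + b" and "b < 4"
    using div_mult_mod_eq[of m 4] mod_less_divisor[of 4 m] by (metis mult.commute zero_less_numeral)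
  have lhs: "(cube_root_series * (1 + fps_X)) $ m = ?P m + (if m = 0 then 0 else ?P (m - 1))"
    by (simp add: distrib_left)
  consider "m = 0" | "b > 0" | "b = 0" "r > 0"
    using m by auto
  then show "(cube_root_series * (1 + fps_X)) $ m = fps_expand 4 cube_root_series $ m"
  proof cases
    case 1
    then show ?thesis
      by (simp add: lhs fps_expand_nth)
  next
    case 2
    have "m - 1 = 4 * r + (b - 1)"
      using m 2 by simp
    then have "?P (m - 1) = ?P m"
      using m \<open>b < 4\<close> by (simp add: cube_root_series_nth_block)
    then have "(cube_root_series * (1 + fps_X)) $ m = 0"
      using lhs m 2 by simp
    moreover have "\<not> 4 dvd m"
      using m 2 \<open>b < 4\<close> by presburger
    ultimately show ?thesis
      by (simp add: fps_expand_nth)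
  next
    case 3
    have "m - 1 = 4 * (r - 1) + 3"
      using m 3 by simp
    then have "?P m + ?P (m - 1) = of_bool (even r \<and> base4_binary (r div 2))
                                 + of_bool (even (r - 1) \<and> base4_binary ((r - 1) div 2))"
      using m 3 cube_root_series_nth_block[of 0 r] cube_root_series_nth_block[of 3 "r - 1"] by simp
    \<comment> \<open>exactly one of \<open>r\<close>, \<open>r - 1\<close> is even, and both halve to \<open>r div 2\<close>\<close>
    also have "\<dots> = of_bool (base4_binary (r div 2))"
    proof (cases "even r")
      case False
      then obtain k where "r = 2 * k + 1"
        by (blast elim: oddE)
      then show ?thesis
        by simp
    qed (use \<open>r > 0\<close> in \<open>simp add: even_diff_nat\<close>)
    also have "\<dots> = ?P r"
      using cube_root_series_nth_pair[of "r mod 2" "r div 2"] by simp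
    finally show ?thesis
      using m 3 lhs by (simp add: fps_expand_nth)
  qed
qed

lemma cube_root_series_cube: "cube_root_series^3 = 1 + fps_X"
proof -
  have "cube_root_series * (1 + fps_X) = cube_root_series * cube_root_series^3"
    by (simp add: cube_root_series_times_one_plus_X fps_power4_bit[symmetric] power_Suc[symmetric])
  moreover have "cube_root_series \<noteq> 0"
    using cube_root_series_nth_0 by (metis fps_zero_nth zero_neq_one)
  ultimately show ?thesis
    by simp
qed

lemma cube_root_series_vanishes:
  assumes "16 * 4^k \<le> m" "m < 24 * 4^k"
  shows "cube_root_series $ m = 0"
proof -
  have "2 * 4^k \<le> m div 8"
    using assms(1) div_le_mono[of "8 * (2 * 4^k)" m 8] by simp
  moreover have "m div 8 < 3 * 4^k"
    using assms(2) by (simp add: less_mult_imp_div_less)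
  ultimately have "\<not> base4_binary (m div 8)"
    by (rule not_base4_binary_leading_digit_2)
  then show ?thesis
    by (simp add: cube_root_series_def)
qed

lemma c_eq_cube_root_series_nth:
  assumes "n \<ge> 1"
  shows "c n = cube_root_series $ (n + 1)"
proof -
  have "1 + fps_X * (1 + TM_G) = cube_root_series"
    by (rule fps_cube_eq_imp_eq)
       (simp_all add: cube_one_plus_X_mult_one_plus_TM_G cube_root_series_cube cube_root_series_nth_0)
  moreover have "(1 + fps_X * (1 + TM_G)) $ (n + 1) = c n"
    using assms by (simp add: distrib_left c_def)
  ultimately show ?thesis
    by simp
qed

lemma c_zero_block:
  assumes "16 * 4^k \<le> n + 1" "n + 1 < 24 * 4^k"
  shows "c n = 0"
proof -
  have "(1::nat) \<le> 4^k"
    by simp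
  then have "n \<ge> 1"
    using assms(1) by linarith
  then show ?thesis
    using assms by (simp add: c_eq_cube_root_series_nth cube_root_series_vanishes)
qed

lemma c_zero_block_beyond:
  fixes N L :: nat
  shows "\<exists>i \<ge> N. \<forall>j < L. c (i + j) = 0"
proof -
  define k where "k = N + L"
  have "k < 4^k"
    by (rule less_le_trans[OF less_exp power_mono]) simp_all
  then have "N < 4^k" "L < 4^k"
    unfolding k_def by simp_all
  then have "N \<le> 16 * 4^k - 1" "\<forall>j < L. c (16 * 4^k - 1 + j) = 0"
    by (auto intro: c_zero_block[of k])
  then show ?thesis
    by blast
qed

theorem mainTheorem8:
  shows "(\<forall>m::nat. m > 0 \<longrightarrow>
            infinite {i::nat. \<forall>j < (4 ^ m - 1) div 3. c (i + j) = 0})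
       \<and> (\<forall>L::nat. \<exists>i::nat. \<forall>j < L. c (i + j) = 0)"
proof (intro conjI allI impI)
  fix m :: nat
  show "infinite {i. \<forall>j < (4 ^ m - 1) div 3. c (i + j) = 0}"
    unfolding infinite_nat_iff_unbounded_le using c_zero_block_beyond by simp
next
  fix L :: nat
  show "\<exists>i. \<forall>j < L. c (i + j) = 0"
    using c_zero_block_beyond[of 0 L] by blast
qed

end
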